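(* Let $R$ be a finite chain ring, $r\ge1$, $\rho\ge2$, and let $A=\bigcup_{i=1}^lA_i\subseteq R$ be a well-conditioned set partitioned into $l$ pairwise disjoint blocks with $|A_i|=r+\rho-1$, so $n=|A|=l(r+\rho-1)$. Let $g\in R[x]$ be a polynomial of degree $r+\rho-1$ with unit leading coefficient which is constant on each $A_i$. Let $r\mid K$ with $t=K/r\le l$. For $a=(a_{i,j})_{0\le i\le r-1,\,0\le j\le t-1}\in R^K$ let $f_a(x)=\sum_{i=0}^{r-1}\sum_{j=0}^{t-1}a_{i,j}g(x)^jx^i$ and $\mathcal C=\{(f_a(\alpha))_{\alpha\in A}:a\in R^K\}$. Then $\mathcal C$ is a free $R$-linear code of rank $K$, for each $i$ the punctured code $\mathcal C_{A_i}$ has minimum distance at least $\rho$ (so $\mathcal C$ has $(r,\rho)$-locality with respect to the partition $\{A_i\}$; any erased coordinate in $A_i$ is recoverable from any $r$ other coordinates in $A_i$), and $$d\ge n-K+1-\left(\frac{K}{r}-1\right)(\rho-1).$$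
   Context: A finite chain ring is a finite commutative local ring whose ideals are totally ordered by inclusion; $N(R)$ is its unit group. A subset $T\subseteq N(R)$ is subtractive if $a-b\in N(R)$ for all distinct $a,b\in T$. A set $\{a_1,\dots,a_n\}\subseteq R$ is well-conditioned if either it is a subtractive subset of $N(R)$, or for some $i$ the set without $a_i$ is a subtractive subset of $N(R)$ and $a_i$ is a zero divisor (or $0$). A code has $(r,\rho)$-locality if its coordinates are partitioned into sets $B_i$ with $|B_i|\le r+\rho-1$ and each punctured code $C_{B_i}$ has minimum distance at least $\rho$. *)

theory Defs
  imports "HOL-Computational_Algebra.Polynomial"
begin

definition is_ideal :: "'a::comm_ring_1 set \<Rightarrow> bool" where
  "is_ideal I \<longleftrightarrow> 0 \<in> I \<and> (\<forall>x\<in>I. \<forall>y\<in>I. x + y \<in> I) \<and> (\<forall>c x. x \<in> I \<longrightarrow> c * x \<in> I)"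

definition is_maximal_ideal :: "'a::comm_ring_1 set \<Rightarrow> bool" where
  "is_maximal_ideal I \<longleftrightarrow> is_ideal I \<and> I \<noteq> UNIV \<and>
     (\<forall>J. is_ideal J \<longrightarrow> I \<subseteq> J \<longrightarrow> J = I \<or> J = UNIV)"

definition local_ring :: "'a::comm_ring_1 itself \<Rightarrow> bool" where
  "local_ring _ \<longleftrightarrow> (\<exists>!I::'a set. is_maximal_ideal I)"

definition chain_ring :: "'a::comm_ring_1 itself \<Rightarrow> bool" where
  "chain_ring T \<longleftrightarrow> finite (UNIV::'a set) \<and> local_ring T \<and>
     (\<forall>I J::'a set. is_ideal I \<longrightarrow> is_ideal J \<longrightarrow> I \<subseteq> J \<or> J \<subseteq> I)"

definition units :: "'a::comm_ring_1 set" where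
  "units = {x. x dvd 1}"

definition subtractive :: "'a::comm_ring_1 set \<Rightarrow> bool" where
  "subtractive T \<longleftrightarrow> T \<subseteq> units \<and> (\<forall>a\<in>T. \<forall>b\<in>T. a \<noteq> b \<longrightarrow> a - b \<in> units)"

definition zero_divisor_or_zero :: "'a::comm_ring_1 \<Rightarrow> bool" where
  "zero_divisor_or_zero a \<longleftrightarrow> a = 0 \<or> (\<exists>b. b \<noteq> 0 \<and> a * b = 0)"

definition well_conditioned :: "'a::comm_ring_1 set \<Rightarrow> bool" where
  "well_conditioned A \<longleftrightarrow> subtractive A \<or>
     (\<exists>a\<in>A. subtractive (A - {a}) \<and> zero_divisor_or_zero a)"

text \<open>Codewords with coordinates indexed by the evaluation set: functions 'a => 'a,
  only the values on the coordinate set matter.\<close>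
definition hdist_on :: "'b set \<Rightarrow> ('b \<Rightarrow> 'a) \<Rightarrow> ('b \<Rightarrow> 'a) \<Rightarrow> nat" where
  "hdist_on S c c' = card {x\<in>S. c x \<noteq> c' x}"

definition min_dist_ge :: "('b \<Rightarrow> 'a) set \<Rightarrow> 'b set \<Rightarrow> int \<Rightarrow> bool" where
  "min_dist_ge C S d \<longleftrightarrow> (\<forall>c\<in>C. \<forall>c'\<in>C. (\<exists>x\<in>S. c x \<noteq> c' x) \<longrightarrow> int (hdist_on S c c') \<ge> d)"

definition linear_code :: "'b set \<Rightarrow> ('b \<Rightarrow> 'a::comm_ring_1) set \<Rightarrow> bool" where
  "linear_code S C \<longleftrightarrow> (\<forall>c\<in>C. \<forall>x. x \<notin> S \<longrightarrow> c x = 0) \<and> (\<lambda>_. 0) \<in> C \<and>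
     (\<forall>c\<in>C. \<forall>c'\<in>C. (\<lambda>x. c x + c' x) \<in> C) \<and> (\<forall>k. \<forall>c\<in>C. (\<lambda>x. k * c x) \<in> C)"

definition free_rank :: "('b \<Rightarrow> 'a::comm_ring_1) set \<Rightarrow> nat \<Rightarrow> bool" where
  "free_rank C K \<longleftrightarrow> (\<exists>b :: nat \<Rightarrow> 'b \<Rightarrow> 'a. (\<forall>i<K. b i \<in> C) \<and>
     (\<forall>c\<in>C. \<exists>!cf::nat \<Rightarrow> 'a. (\<forall>i\<ge>K. cf i = 0) \<and> c = (\<lambda>x. \<Sum>i<K. cf i * b i x)))"

definition has_locality :: "('b \<Rightarrow> 'a) set \<Rightarrow> 'b set \<Rightarrow> nat \<Rightarrow> nat \<Rightarrow> nat \<Rightarrow> (nat \<Rightarrow> 'b set) \<Rightarrow> bool" where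
  "has_locality C S r \<rho> l B \<longleftrightarrow> S = (\<Union>i<l. B i) \<and>
     (\<forall>i<l. \<forall>j<l. i \<noteq> j \<longrightarrow> B i \<inter> B j = {}) \<and>
     (\<forall>i<l. card (B i) \<le> r + \<rho> - 1 \<and> min_dist_ge C (B i) (int \<rho>))"

definition f_msg :: "nat \<Rightarrow> nat \<Rightarrow> 'a::comm_ring_1 poly \<Rightarrow> (nat \<Rightarrow> nat \<Rightarrow> 'a) \<Rightarrow> 'a \<Rightarrow> 'a" where
  "f_msg r t g a x = (\<Sum>i<r. \<Sum>j<t. a i j * (poly g x) ^ j * x ^ i)"

definition code :: "'a set \<Rightarrow> nat \<Rightarrow> nat \<Rightarrow> 'a::comm_ring_1 poly \<Rightarrow> ('a \<Rightarrow> 'a) set" where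
  "code A r t g = {(\<lambda>x. if x \<in> A then f_msg r t g a x else 0) | a. True}"

end

theory Submission
  imports Defs
begin

text \<open>In a chain ring the non-units form an ideal, so for a well-conditioned set A every difference
  of two distinct points is a unit (the exceptional zero divisor minus a unit is again a unit).
  Over such evaluation sets the factor theorem gives the field-like root bound: a nonzero polynomial
  of degree d vanishes at no more than d points.  The message polynomial
  f_a = sum_j g^j P_j with deg P_j < r has degree at most (t - 1)(r + rho - 1) + r - 1 < |A|, which
  gives the global distance; since g has unit leading coefficient, f_a = 0 forces all P_j = 0
  (g-adic expansion), which gives injectivity of the encoding and hence freeness of rank K = rt.
  On a block g takes a single value, so f_a restricts to a polynomial of degree below r, and
  |A_i| - (r - 1) = rho is the local distance.\<close>

definition unit_diff_set :: "'a::comm_ring_1 set \<Rightarrow> bool" where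
  "unit_diff_set S \<longleftrightarrow> (\<forall>x\<in>S. \<forall>y\<in>S. x \<noteq> y \<longrightarrow> x - y \<in> units)"

lemma unit_diff_set_subset: "unit_diff_set S \<Longrightarrow> T \<subseteq> S \<Longrightarrow> unit_diff_set T"
  unfolding unit_diff_set_def by blast

lemma units_mult_eq_0_imp:
  fixes u v :: "'a::comm_ring_1"
  assumes "u \<in> units" "u * v = 0"
  shows "v = 0"
proof -
  from assms(1) obtain w where "1 = u * w" unfolding units_def by (auto elim: dvdE)
  then have "v = w * (u * v)" by (metis mult.commute mult.left_neutral mult.assoc)
  with assms(2) show ?thesis by simp
qed

lemma units_minus_commute: "(x::'a::comm_ring_1) - y \<in> units \<longleftrightarrow> y - x \<in> units"
proof -
  have "y - x = - (x - y)" by simp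
  then show ?thesis unfolding units_def by (simp only: mem_Collect_eq minus_dvd_iff)
qed

lemma is_ideal_range_mult: "is_ideal (range (\<lambda>c. z * c))"
  unfolding is_ideal_def
proof (intro conjI ballI allI impI)
  show "0 \<in> range (\<lambda>c. z * c)" by (rule range_eqI[of _ _ 0]) simp
next
  fix u v assume "u \<in> range (\<lambda>c. z * c)" "v \<in> range (\<lambda>c. z * c)"
  then obtain c1 c2 where "u = z * c1" "v = z * c2" by blast
  then show "u + v \<in> range (\<lambda>c. z * c)" by (intro range_eqI[of _ _ "c1 + c2"]) (simp add: distrib_left)
next
  fix c u assume "u \<in> range (\<lambda>c. z * c)"
  then obtain c1 where "u = z * c1" by blast
  then show "c * u \<in> range (\<lambda>c. z * c)" by (intro range_eqI[of _ _ "c * c1"]) (simp add: mult_ac)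
qed

lemma chain_ring_diff_nonunits:
  fixes x y :: "'a::comm_ring_1"
  assumes "chain_ring TYPE('a)" "x \<notin> units" "y \<notin> units"
  shows "x - y \<notin> units"
proof -
  have nonunit_mult: "z * c \<notin> units" if "z \<notin> units" for z c :: 'a
    using that unfolding units_def by (metis dvd_mult_left mem_Collect_eq dvd_trans)
  have "range (\<lambda>c. x * c) \<subseteq> range (\<lambda>c. y * c) \<or> range (\<lambda>c. y * c) \<subseteq> range (\<lambda>c. x * c)"
    using assms(1) is_ideal_range_mult unfolding chain_ring_def by blast
  then show ?thesis
  proof
    assume "range (\<lambda>c. x * c) \<subseteq> range (\<lambda>c. y * c)"
    then obtain c where "x * 1 = y * c" by blast
    then have "x - y = y * (c - 1)" by (simp add: algebra_simps)
    then show ?thesis using nonunit_mult assms(3) by simp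
  next
    assume "range (\<lambda>c. y * c) \<subseteq> range (\<lambda>c. x * c)"
    then obtain c where "y * 1 = x * c" by blast
    then have "x - y = x * (1 - c)" by (simp add: algebra_simps)
    then show ?thesis using nonunit_mult assms(2) by simp
  qed
qed

lemma well_conditioned_imp_unit_diff_set:
  fixes A :: "'a::comm_ring_1 set"
  assumes chain: "chain_ring TYPE('a)" and "well_conditioned A"
  shows "unit_diff_set A"
  using assms(2) unfolding well_conditioned_def
proof
  assume "subtractive A"
  then show ?thesis unfolding subtractive_def unit_diff_set_def by blast
next
  assume "\<exists>a\<in>A. subtractive (A - {a}) \<and> zero_divisor_or_zero a"
  then obtain a where a: "subtractive (A - {a})" "zero_divisor_or_zero a" by blast
  have diff_a: "a - y \<in> units" if y: "y \<in> A" "y \<noteq> a" for y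
  proof -
    have y_unit: "y \<in> units" using a(1) y unfolding subtractive_def by blast
    have "a \<notin> units"
    proof
      assume a_unit: "a \<in> units"
      from a(2) show False unfolding zero_divisor_or_zero_def
      proof
        assume "a = 0"
        with a_unit have "(1::'a) = 0" by (simp add: units_def)
        then have "y = a" using \<open>a = 0\<close> by (metis mult_1_right mult_zero_right)
        with y show False by simp
      qed (use a_unit units_mult_eq_0_imp in blast)
    qed
    then show ?thesis
      using chain_ring_diff_nonunits[OF chain, of a "a - y"] y_unit by auto
  qed
  show ?thesis unfolding unit_diff_set_def
  proof (intro ballI impI)
    fix x y assume xy: "x \<in> A" "y \<in> A" "x \<noteq> y"
    consider "x = a" | "y = a" | "x \<noteq> a" "y \<noteq> a" by blast
    then show "x - y \<in> units"
    proof cases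
      case 2 then show ?thesis using diff_a[of x] xy units_minus_commute by blast
    next
      case 3 then show ?thesis using a(1) xy unfolding subtractive_def by blast
    qed (use diff_a xy in auto)
  qed
qed

lemma degree_mult_unit_lead_coeff:
  fixes g h :: "'a::comm_ring_1 poly"
  assumes "lead_coeff g \<in> units" "h \<noteq> 0"
  shows "degree (g * h) = degree g + degree h"
proof (rule antisym)
  show "degree (g * h) \<le> degree g + degree h" by (rule degree_mult_le)
  have "lead_coeff g * lead_coeff h \<noteq> 0"
    using units_mult_eq_0_imp[OF assms(1), of "lead_coeff h"] assms(2) by auto
  then show "degree g + degree h \<le> degree (g * h)"
    by (metis coeff_mult_degree_sum le_degree)
qed

lemma card_roots_le_degree:
  fixes p :: "'a::comm_ring_1 poly"
  assumes S: "finite S" "unit_diff_set S" and "p \<noteq> 0"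
  shows "card {x\<in>S. poly p x = 0} \<le> degree p"
  using assms(3)
proof (induction "degree p" arbitrary: p rule: less_induct)
  case less
  show ?case
  proof (cases "\<exists>a\<in>S. poly p a = 0")
    case False
    then have "{x\<in>S. poly p x = 0} = {}" by blast
    then show ?thesis by (metis card.empty zero_le)
  next
    case True
    then obtain a where a: "a \<in> S" "poly p a = 0" by blast
    then obtain q where q: "p = [:-a, 1:] * q" by (metis dvdE poly_eq_0_iff_dvd)
    with less.prems have "q \<noteq> 0" by auto
    then have deg_p: "degree p = Suc (degree q)"
      using degree_mult_unit_lead_coeff[of "[:-a, 1:]" q] q by (simp add: units_def)
    have "{x\<in>S. poly p x = 0} \<subseteq> insert a {x\<in>S. poly q x = 0}"
    proof
      fix b assume b: "b \<in> {x\<in>S. poly p x = 0}"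
      show "b \<in> insert a {x\<in>S. poly q x = 0}"
      proof (cases "b = a")
        case False
        then have "b - a \<in> units" using S(2) a b unfolding unit_diff_set_def by auto
        moreover have "(b - a) * poly q b = 0" using b q by (simp add: algebra_simps)
        ultimately show ?thesis using units_mult_eq_0_imp b by blast
      qed simp
    qed
    then have "card {x\<in>S. poly p x = 0} \<le> card (insert a {x\<in>S. poly q x = 0})"
      using S(1) by (intro card_mono) auto
    also have "\<dots> \<le> Suc (card {x\<in>S. poly q x = 0})" by (simp add: card_insert_if S(1))
    also have "\<dots> \<le> Suc (degree q)" using less.hyps[of q] deg_p \<open>q \<noteq> 0\<close> by simp
    finally show ?thesis using deg_p by simp
  qed
qed

lemma hdist_on_ge_card_minus_degree:
  fixes S :: "'a::comm_ring_1 set"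
  assumes S: "finite S" "unit_diff_set S"
    and diff: "\<forall>x\<in>S. c x - c' x = poly Q x" and "\<exists>x\<in>S. c x \<noteq> c' x"
  shows "card S - degree Q \<le> hdist_on S c c'"
proof -
  have "Q \<noteq> 0" using assms(4) diff by auto
  have "{x\<in>S. c x \<noteq> c' x} = S - {x\<in>S. poly Q x = 0}" using diff by force
  then have "hdist_on S c c' = card S - card {x\<in>S. poly Q x = 0}"
    unfolding hdist_on_def using S(1) by (simp add: card_Diff_subset)
  moreover have "card {x\<in>S. poly Q x = 0} \<le> degree Q"
    by (rule card_roots_le_degree[OF S \<open>Q \<noteq> 0\<close>])
  ultimately show ?thesis by simp
qed

lemma min_dist_ge_mono: "min_dist_ge C S d' \<Longrightarrow> d \<le> d' \<Longrightarrow> min_dist_ge C S d"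
  unfolding min_dist_ge_def by force

definition low_poly :: "nat \<Rightarrow> (nat \<Rightarrow> 'a::comm_ring_1) \<Rightarrow> 'a poly" where
  "low_poly r b = (\<Sum>i<r. monom (b i) i)"

definition msg_poly :: "nat \<Rightarrow> nat \<Rightarrow> 'a::comm_ring_1 poly \<Rightarrow> (nat \<Rightarrow> nat \<Rightarrow> 'a) \<Rightarrow> 'a poly" where
  "msg_poly r t g a = (\<Sum>j<t. g ^ j * low_poly r (\<lambda>i. a i j))"

lemma poly_low_poly: "poly (low_poly r b) x = (\<Sum>i<r. b i * x ^ i)"
  by (simp add: low_poly_def poly_sum poly_monom)

lemma degree_low_poly_le: "degree (low_poly r b) \<le> r - 1"
  unfolding low_poly_def by (rule degree_sum_le) (auto intro: order.trans[OF degree_monom_le])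

lemma coeff_low_poly: "i < r \<Longrightarrow> coeff (low_poly r b) i = b i"
  by (simp add: low_poly_def coeff_sum)

lemma low_poly_diff: "low_poly r b - low_poly r b' = low_poly r (\<lambda>i. b i - b' i)"
  by (simp add: low_poly_def sum_subtractf[symmetric] diff_monom)

lemma msg_poly_diff: "msg_poly r t g a - msg_poly r t g b = msg_poly r t g (\<lambda>i j. a i j - b i j)"
  by (simp add: msg_poly_def sum_subtractf[symmetric] right_diff_distrib[symmetric] low_poly_diff)

lemma msg_poly_Suc:
  "msg_poly r (Suc t) g a = low_poly r (\<lambda>i. a i 0) + g * msg_poly r t g (\<lambda>i j. a i (Suc j))"
  unfolding msg_poly_def sum.lessThan_Suc_shift
  by (simp add: sum_distrib_left mult.assoc del: sum.lessThan_Suc)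

lemma poly_msg_poly: "poly (msg_poly r t g a) x = f_msg r t g a x"
proof -
  have "poly (msg_poly r t g a) x = (\<Sum>j<t. \<Sum>i<r. a i j * poly g x ^ j * x ^ i)"
    by (simp add: msg_poly_def poly_sum poly_low_poly sum_distrib_left mult_ac)
  also have "\<dots> = f_msg r t g a x" unfolding f_msg_def by (rule sum.swap)
  finally show ?thesis .
qed

lemma degree_msg_poly_le: "degree (msg_poly r t g a) \<le> (t - 1) * degree g + (r - 1)"
  unfolding msg_poly_def
proof (rule degree_sum_le)
  fix j assume "j \<in> {..<t}"
  then have "j \<le> t - 1" by simp
  then have "degree g * j \<le> (t - 1) * degree g" by (simp add: mult.commute)
  moreover have "degree (g ^ j * low_poly r (\<lambda>i. a i j)) \<le> degree g * j + (r - 1)"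
    using degree_mult_le[of "g ^ j"] degree_power_le[of g j] degree_low_poly_le[of r]
    by (meson add_le_mono order_trans)
  ultimately show "degree (g ^ j * low_poly r (\<lambda>i. a i j)) \<le> (t - 1) * degree g + (r - 1)"
    by linarith
qed simp

lemma msg_poly_eq_0_imp:
  fixes g :: "'a::comm_ring_1 poly"
  assumes lead: "lead_coeff g \<in> units" and r: "r \<le> degree g" and "msg_poly r t g a = 0"
  shows "\<forall>i<r. \<forall>j<t. a i j = 0"
proof (cases "r = 0")
  case False
  then have low_deg: "degree (low_poly r b) < degree g" for b
    using degree_low_poly_le[of r b] r by linarith
  show ?thesis
    using assms(3)
  proof (induction t arbitrary: a)
    case (Suc t)
    define tail where "tail = msg_poly r t g (\<lambda>i j. a i (Suc j))"
    have sum_0: "low_poly r (\<lambda>i. a i 0) + g * tail = 0"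
      using Suc.prems by (simp add: msg_poly_Suc tail_def)
    have "tail = 0"
    proof (rule ccontr)
      assume "tail \<noteq> 0"
      then have deg_g: "degree g \<le> degree (g * tail)"
        using degree_mult_unit_lead_coeff[OF lead] by simp
      have "degree (low_poly r (\<lambda>i. a i 0) + g * tail) = degree (g * tail)"
        using low_deg[of "\<lambda>i. a i 0"] deg_g by (intro degree_add_eq_right) simp
      then show False using sum_0 deg_g low_deg[of "\<lambda>i. a i 0"] by simp
    qed
    then have "low_poly r (\<lambda>i. a i 0) = 0" using sum_0 by simp
    then have "a i 0 = 0" if "i < r" for i using coeff_low_poly[OF that, of "\<lambda>i. a i 0"] by simp
    moreover have "\<forall>i<r. \<forall>j<t. a i (Suc j) = 0" using Suc.IH \<open>tail = 0\<close> unfolding tail_def by blast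
    ultimately show ?case by (metis less_Suc_eq_0_disj)
  qed simp
qed simp

lemma f_msg_cong:
  "\<forall>i<r. \<forall>j<t. a i j = b i j \<Longrightarrow> f_msg r t g a = f_msg r t g b"
  unfolding f_msg_def by (intro ext sum.cong) auto

lemma f_msg_eq_poly_low_poly:
  assumes "poly g x = c"
  shows "f_msg r t g a x = poly (low_poly r (\<lambda>i. \<Sum>j<t. a i j * c ^ j)) x"
  unfolding poly_low_poly f_msg_def using assms
  by (simp add: sum_distrib_right sum_distrib_left mult_ac)

definition codeword :: "'a set \<Rightarrow> nat \<Rightarrow> nat \<Rightarrow> 'a::comm_ring_1 poly \<Rightarrow> (nat \<Rightarrow> nat \<Rightarrow> 'a) \<Rightarrow> 'a \<Rightarrow> 'a" where
  "codeword A r t g a = (\<lambda>x. if x \<in> A then f_msg r t g a x else 0)"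

lemma code_eq_range: "code A r t g = range (codeword A r t g)"
  by (auto simp: code_def codeword_def)

lemma linear_code_code: "linear_code A (code A r t g)"
  unfolding linear_code_def code_eq_range
proof (intro conjI ballI allI impI)
  show "(\<lambda>_. 0) \<in> range (codeword A r t g)"
    by (rule range_eqI[of _ _ "\<lambda>i j. 0"]) (simp add: codeword_def f_msg_def fun_eq_iff)
next
  fix c x assume "c \<in> range (codeword A r t g)" "x \<notin> A"
  then show "c x = 0" by (auto simp: codeword_def)
next
  fix c c' assume "c \<in> range (codeword A r t g)" "c' \<in> range (codeword A r t g)"
  then obtain a a' where "c = codeword A r t g a" "c' = codeword A r t g a'" by auto
  then show "(\<lambda>x. c x + c' x) \<in> range (codeword A r t g)"
    by (intro range_eqI[of _ _ "\<lambda>i j. a i j + a' i j"])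
       (simp add: codeword_def f_msg_def sum.distrib distrib_right fun_eq_iff)
next
  fix k c assume "c \<in> range (codeword A r t g)"
  then obtain a where "c = codeword A r t g a" by auto
  then show "(\<lambda>x. k * c x) \<in> range (codeword A r t g)"
    by (intro range_eqI[of _ _ "\<lambda>i j. k * a i j"])
       (simp add: codeword_def f_msg_def sum_distrib_left mult_ac fun_eq_iff)
qed

lemma min_dist_ge_code:
  assumes A: "finite A" "unit_diff_set A"
  shows "min_dist_ge (code A r t g) A (int (card A) - int ((t - 1) * degree g + (r - 1)))"
  unfolding min_dist_ge_def code_eq_range
proof (intro ballI impI)
  fix c c' assume "c \<in> range (codeword A r t g)" "c' \<in> range (codeword A r t g)"
    and differ: "\<exists>x\<in>A. c x \<noteq> c' x"
  then obtain a b where ab: "c = codeword A r t g a" "c' = codeword A r t g b" by blast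
  define Q where "Q = msg_poly r t g a - msg_poly r t g b"
  have "\<forall>x\<in>A. c x - c' x = poly Q x" by (simp add: ab codeword_def Q_def poly_msg_poly)
  then have "card A - degree Q \<le> hdist_on A c c'"
    using hdist_on_ge_card_minus_degree[OF A _ differ] by blast
  moreover have "degree Q \<le> (t - 1) * degree g + (r - 1)"
    unfolding Q_def msg_poly_diff by (rule degree_msg_poly_le)
  ultimately show "int (card A) - int ((t - 1) * degree g + (r - 1)) \<le> int (hdist_on A c c')"
    by linarith
qed

lemma min_dist_ge_code_rank_0: "min_dist_ge (code A r 0 g) S d"
  unfolding min_dist_ge_def code_eq_range by (auto simp: codeword_def f_msg_def)

lemma min_dist_ge_code_block:
  assumes "B \<subseteq> A" and B: "finite B" "unit_diff_set B"
    and g_const: "\<forall>x\<in>B. \<forall>y\<in>B. poly g x = poly g y"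
  shows "min_dist_ge (code A r t g) B (int (card B) - int (r - 1))"
  unfolding min_dist_ge_def code_eq_range
proof (intro ballI impI)
  fix c c' assume "c \<in> range (codeword A r t g)" "c' \<in> range (codeword A r t g)"
    and differ: "\<exists>x\<in>B. c x \<noteq> c' x"
  then obtain a b where ab: "c = codeword A r t g a" "c' = codeword A r t g b" by blast
  obtain y where "y \<in> B" using differ by blast
  define digits where "digits a = (\<lambda>i. \<Sum>j<t. a i j * poly g y ^ j)" for a :: "nat \<Rightarrow> nat \<Rightarrow> 'a"
  define Q where "Q = low_poly r (digits a) - low_poly r (digits b)"
  have "\<forall>x\<in>B. c x - c' x = poly Q x"
  proof
    fix x assume "x \<in> B"
    then have "x \<in> A" and gx: "poly g x = poly g y" using \<open>B \<subseteq> A\<close> g_const \<open>y \<in> B\<close> by blast+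
    then show "c x - c' x = poly Q x"
      by (simp add: ab codeword_def Q_def digits_def f_msg_eq_poly_low_poly[OF gx])
  qed
  then have "card B - degree Q \<le> hdist_on B c c'"
    using hdist_on_ge_card_minus_degree[OF B _ differ] by blast
  moreover have "degree Q \<le> r - 1" unfolding Q_def by (intro degree_diff_le degree_low_poly_le)
  ultimately show "int (card B) - int (r - 1) \<le> int (hdist_on B c c')" by linarith
qed

lemma min_dist_ge_code_locality_bound:
  assumes A: "finite A" "unit_diff_set A"
    and r: "1 \<le> r" and rho: "2 \<le> \<rho>" and g_deg: "degree g = r + \<rho> - 1"
  shows "min_dist_ge (code A r t g) A (int (card A) - int (r * t) + 1 - (int t - 1) * (int \<rho> - 1))"
proof (cases t)
  case 0
  then show ?thesis by (simp only: min_dist_ge_code_rank_0)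
next
  case (Suc t')
  obtain r' where r': "r = 1 + r'" using le_Suc_ex[OF r] by blast
  obtain \<rho>' where \<rho>': "\<rho> = 2 + \<rho>'" using le_Suc_ex[OF rho] by blast
  have "int ((t - 1) * degree g + (r - 1)) = int (r * t) - 1 + (int t - 1) * (int \<rho> - 1)"
    using Suc g_deg unfolding r' \<rho>' by (simp add: algebra_simps)
  then show ?thesis
    by (intro min_dist_ge_mono[OF min_dist_ge_code[OF A]]) simp
qed

lemma f_msg_inj_on:
  fixes g :: "'a::comm_ring_1 poly"
  assumes A: "finite A" "unit_diff_set A"
    and lead: "lead_coeff g \<in> units" and r: "r \<le> degree g" and card_A: "t * degree g \<le> card A"
    and eq: "\<forall>x\<in>A. f_msg r t g a x = f_msg r t g b x"
  shows "\<forall>i<r. \<forall>j<t. a i j = b i j"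
proof (cases "r = 0 \<or> t = 0")
  case False
  define Q where "Q = msg_poly r t g (\<lambda>i j. a i j - b i j)"
  have "Q = 0"
  proof (rule ccontr)
    assume "Q \<noteq> 0"
    have "{x\<in>A. poly Q x = 0} = A" using eq by (auto simp: Q_def poly_msg_poly msg_poly_diff[symmetric])
    then have "card A \<le> degree Q" using card_roots_le_degree[OF A \<open>Q \<noteq> 0\<close>] by simp
    also have "\<dots> \<le> (t - 1) * degree g + (r - 1)" unfolding Q_def by (rule degree_msg_poly_le)
    also have "\<dots> < t * degree g"
      using False r by (cases t) auto
    finally show False using card_A by simp
  qed
  then show ?thesis using msg_poly_eq_0_imp[OF lead r] Q_def by fastforce
qed auto

lemma add_mult_less_mult: "i < r \<Longrightarrow> j < t \<Longrightarrow> i + r * j < r * (t::nat)"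
proof -
  assume "i < r" "j < t"
  then have "i + r * j < r * Suc j" by simp
  also have "\<dots> \<le> r * t" using \<open>j < t\<close> by (intro mult_le_mono2) simp
  finally show ?thesis .
qed

lemma sum_mod_div_eq_sum_sum:
  fixes h :: "nat \<Rightarrow> nat \<Rightarrow> 'b::comm_monoid_add"
  assumes "0 < r"
  shows "(\<Sum>k<r * t. h (k mod r) (k div r)) = (\<Sum>i<r. \<Sum>j<t. h i j)"
proof -
  have "(\<Sum>k<r * t. h (k mod r) (k div r)) = (\<Sum>(i, j)\<in>{..<r} \<times> {..<t}. h i j)"
  proof (rule sum.reindex_bij_witness[of _ "\<lambda>(i, j). i + r * j" "\<lambda>k. (k mod r, k div r)"])
    fix k assume "k \<in> {..<r * t}"
    then show "(k mod r, k div r) \<in> {..<r} \<times> {..<t}"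
      using assms by (auto intro: less_mult_imp_div_less simp: mult.commute)
  next
    fix p assume "p \<in> {..<r} \<times> {..<t}"
    then show "(\<lambda>(i, j). i + r * j) p \<in> {..<r * t}" by (auto intro: add_mult_less_mult)
  qed (use assms in auto)
  also have "\<dots> = (\<Sum>i<r. \<Sum>j<t. h i j)" by (rule sum.cartesian_product[symmetric])
  finally show ?thesis .
qed

definition code_basis :: "'a set \<Rightarrow> nat \<Rightarrow> 'a::comm_ring_1 poly \<Rightarrow> nat \<Rightarrow> 'a \<Rightarrow> 'a" where
  "code_basis A r g k = (\<lambda>x. if x \<in> A then poly g x ^ (k div r) * x ^ (k mod r) else 0)"

lemma sum_code_basis:
  assumes "0 < r"
  shows "(\<lambda>x. \<Sum>k<r * t. cf k * code_basis A r g k x) = codeword A r t g (\<lambda>i j. cf (i + r * j))"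
proof
  fix x
  show "(\<Sum>k<r * t. cf k * code_basis A r g k x) = codeword A r t g (\<lambda>i j. cf (i + r * j)) x"
  proof (cases "x \<in> A")
    case True
    then show ?thesis unfolding codeword_def f_msg_def
      by (subst sum_mod_div_eq_sum_sum[OF assms, symmetric]) (simp add: code_basis_def mult.assoc)
  qed (simp add: code_basis_def codeword_def)
qed

lemma free_rank_code:
  fixes g :: "'a::comm_ring_1 poly"
  assumes r: "0 < r"
    and inj: "\<And>a b. \<forall>x\<in>A. f_msg r t g a x = f_msg r t g b x \<Longrightarrow> \<forall>i<r. \<forall>j<t. a i j = b i j"
  shows "free_rank (code A r t g) (r * t)"
  unfolding free_rank_def
proof (intro exI[of _ "code_basis A r g"] conjI allI impI ballI)
  fix k assume k: "k < r * t"
  have "code_basis A r g k = (\<lambda>x. \<Sum>k'<r * t. (if k' = k then 1 else 0) * code_basis A r g k' x)"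
    using k by (simp add: if_distrib[of "\<lambda>u. u * _"] cong: if_cong)
  also have "\<dots> = codeword A r t g (\<lambda>i j. if i + r * j = k then 1 else 0)"
    by (rule sum_code_basis[OF r])
  finally show "code_basis A r g k \<in> code A r t g" by (simp add: code_eq_range)
next
  fix c assume "c \<in> code A r t g"
  then obtain a where c: "c = codeword A r t g a" by (auto simp: code_eq_range)
  show "\<exists>!cf. (\<forall>k\<ge>r * t. cf k = 0) \<and> c = (\<lambda>x. \<Sum>k<r * t. cf k * code_basis A r g k x)"
  proof (rule ex_ex1I)
    define cf where "cf k = (if k < r * t then a (k mod r) (k div r) else 0)" for k
    have "\<forall>i<r. \<forall>j<t. a i j = cf (i + r * j)" using add_mult_less_mult by (simp add: cf_def)
    then have msg_eq: "f_msg r t g a = f_msg r t g (\<lambda>i j. cf (i + r * j))" by (rule f_msg_cong)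
    have "c = (\<lambda>x. \<Sum>k<r * t. cf k * code_basis A r g k x)"
      unfolding c codeword_def sum_code_basis[OF r] msg_eq ..
    then show "\<exists>cf. (\<forall>k\<ge>r * t. cf k = 0) \<and> c = (\<lambda>x. \<Sum>k<r * t. cf k * code_basis A r g k x)"
      by (intro exI[of _ cf]) (simp add: cf_def)
  next
    fix cf1 cf2
    assume cf1: "(\<forall>k\<ge>r * t. cf1 k = 0) \<and> c = (\<lambda>x. \<Sum>k<r * t. cf1 k * code_basis A r g k x)"
      and cf2: "(\<forall>k\<ge>r * t. cf2 k = 0) \<and> c = (\<lambda>x. \<Sum>k<r * t. cf2 k * code_basis A r g k x)"
    then have "codeword A r t g (\<lambda>i j. cf1 (i + r * j)) = codeword A r t g (\<lambda>i j. cf2 (i + r * j))"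
      by (simp add: sum_code_basis[OF r])
    then have "\<forall>x\<in>A. f_msg r t g (\<lambda>i j. cf1 (i + r * j)) x = f_msg r t g (\<lambda>i j. cf2 (i + r * j)) x"
      unfolding codeword_def by (metis (mono_tags))
    then have agree: "\<forall>i<r. \<forall>j<t. cf1 (i + r * j) = cf2 (i + r * j)" by (rule inj)
    show "cf1 = cf2"
    proof
      fix k
      show "cf1 k = cf2 k"
      proof (cases "k < r * t")
        case True
        then have "k mod r < r" "k div r < t"
          using r by (auto intro: less_mult_imp_div_less simp: mult.commute)
        then show ?thesis using agree mod_mult_div_eq[of k r] by metis
      qed (use cf1 cf2 in simp)
    qed
  qed
qed

theorem mainTheorem12:
  fixes A :: "'a::comm_ring_1 set"
    and Ablk :: "nat \<Rightarrow> 'a set"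
    and g :: "'a poly"
    and r \<rho> l K t :: nat
  assumes chain: "chain_ring TYPE('a)"
    and r: "r \<ge> 1" and rho: "\<rho> \<ge> 2"
    and A_union: "A = (\<Union>i<l. Ablk i)"
    and disj: "\<forall>i<l. \<forall>j<l. i \<noteq> j \<longrightarrow> Ablk i \<inter> Ablk j = {}"
    and blk_card: "\<forall>i<l. card (Ablk i) = r + \<rho> - 1"
    and wc: "well_conditioned A"
    and g_deg: "degree g = r + \<rho> - 1"
    and g_lead: "lead_coeff g \<in> units"
    and g_const: "\<forall>i<l. \<forall>x\<in>Ablk i. \<forall>y\<in>Ablk i. poly g x = poly g y"
    and K: "K = r * t" and t: "t \<le> l"
  shows "linear_code A (code A r t g) \<and> free_rank (code A r t g) K
    \<and> (\<forall>i<l. min_dist_ge (code A r t g) (Ablk i) (int \<rho>))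
    \<and> has_locality (code A r t g) A r \<rho> l Ablk
    \<and> min_dist_ge (code A r t g) A
         (int (card A) - int K + 1 - (int K div int r - 1) * (int \<rho> - 1))"
proof -
  have fin: "finite S" for S :: "'a set"
    using chain unfolding chain_ring_def by (metis finite_subset subset_UNIV)
  have A: "finite A" "unit_diff_set A"
    using fin well_conditioned_imp_unit_diff_set[OF chain wc] by auto
  have card_A: "card A = l * degree g"
    using blk_card g_deg fin disj unfolding A_union by (subst card_UN_disjoint) auto
  have inj_hyps: "r \<le> degree g" "t * degree g \<le> card A" using g_deg rho card_A t by simp_all
  have "free_rank (code A r t g) K"
    unfolding K using r f_msg_inj_on[OF A g_lead inj_hyps] by (intro free_rank_code) simp_all
  moreover have blocks: "\<forall>i<l. min_dist_ge (code A r t g) (Ablk i) (int \<rho>)"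
  proof (intro allI impI)
    fix i assume "i < l"
    then have sub: "Ablk i \<subseteq> A" using A_union by auto
    have "min_dist_ge (code A r t g) (Ablk i) (int (card (Ablk i)) - int (r - 1))"
      using g_const \<open>i < l\<close> by (intro min_dist_ge_code_block[OF sub fin unit_diff_set_subset[OF A(2) sub]]) blast
    then show "min_dist_ge (code A r t g) (Ablk i) (int \<rho>)"
      by (rule min_dist_ge_mono) (use blk_card \<open>i < l\<close> r in simp)
  qed
  moreover have "min_dist_ge (code A r t g) A
      (int (card A) - int K + 1 - (int K div int r - 1) * (int \<rho> - 1))"
    using min_dist_ge_code_locality_bound[OF A r rho g_deg, of t] r K by simp
  ultimately show ?thesis
    using linear_code_code A_union disj blk_card unfolding has_locality_def by auto
qed

end
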